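(* Let $\beta\in(3/2,\beta^*]$. Suppose $\omega,\omega'\in\Omega$ satisfy $\omega\prec\omega'$. Then for every $\vec z\in S_\beta$, $$(d_1(\omega,\vec z),d_2(\omega,\vec z),\ldots)\preceq(d_1(\omega',\vec z),d_2(\omega',\vec z),\ldots).$$
   Context: $\beta^*\approx1.5437$ is the real root of $x^3-2x^2+2x=2$. $\vec q_0=(0,0)$, $\vec q_1=(1,0)$, $\vec q_2=(0,1)$, $f_i(\vec z)=(\vec z+\vec q_i)/\beta$, $S_\beta$ the attractor of this IFS. $H=\{(x,y):x<\frac1\beta,\ y<\frac1\beta,\ x+y>\frac{1}{\beta(\beta-1)}\}$; $\tilde E_0=([0,\frac1\beta)\times[0,\frac1\beta))\setminus H$; $\tilde E_1=\{0\le y<\frac1\beta,\ \frac{1}{\beta(\beta-1)}<x+y\le\frac1{\beta-1}\}\setminus H$; $\tilde E_2=\{0\le x<\frac1\beta,\ \frac{1}{\beta(\beta-1)}<x+y\le\frac1{\beta-1}\}\setminus H$; $\tilde C_{01}=\{x\ge\frac1\beta,\ y\ge0,\ x+y\le\frac{1}{\beta(\beta-1)}\}$; $\tilde C_{12}=\{x\ge\frac1\beta,\ y\ge\frac1\beta,\ x+y\le\frac1{\beta-1}\}$; $\tilde C_{02}=\{x\ge0,\ y\ge\frac1\beta,\ x+y\le\frac{1}{\beta(\beta-1)}\}$. For $\{i,j,k\}=\{0,1,2\}$, $E_i=\bigl(\tilde E_i\cup\bigcup_{n\ge1}f_jf_i^n(H)\cup\bigcup_{n\ge1}f_kf_i^n(H)\bigr)\setminus\bigcup_{n\ge0}f_i^n(H)$;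 for $ij\in\{01,12,02\}$, $C_{ij}=\tilde C_{ij}\setminus\bigl(\bigcup_{n\ge1}f_if_j^n(H)\cup\bigcup_{n\ge1}f_jf_i^n(H)\bigr)$. $\Omega=\{0,1\}^{\mathbb N}$ with left shift $\sigma$. $K_\beta:\Omega\times S_\beta\to\Omega\times S_\beta$: $K_\beta(\omega,\vec z)=(\omega,\beta\vec z-\vec q_i)$ if $\vec z\in E_i$; $(\sigma\omega,\beta\vec z-\vec q_i)$ if $\omega_1=0$, $\vec z\in C_{ij}$; $(\sigma\omega,\beta\vec z-\vec q_j)$ if $\omega_1=1$, $\vec z\in C_{ij}$. The digit $d_1(\omega,\vec z)$ is the vector subtracted, and $d_n=d_1\circ K_\beta^{n-1}$. $\prec,\preceq$ denote lexicographic order on $\Omega$ and on $\{\vec q_0,\vec q_1,\vec q_2\}^{\mathbb N}$ (with $\vec q_0<\vec q_1<\vec q_2$). *)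

theory Defs
  imports "HOL-Analysis.Analysis"
begin

text \<open>beta-star: the real root of x^3 - 2x^2 + 2x = 2 (unique, the cubic is strictly increasing).\<close>
definition beta_star :: real where
  "beta_star = (THE x::real. x^3 - 2*x^2 + 2*x = 2)"

definition qv :: "nat \<Rightarrow> real \<times> real" where
  "qv i = (if i = 0 then (0,0) else if i = 1 then (1,0) else (0,1))"

definition ifs_map :: "real \<Rightarrow> nat \<Rightarrow> real \<times> real \<Rightarrow> real \<times> real" where
  "ifs_map \<beta> i z = (1/\<beta>) *\<^sub>R (z + qv i)"

definition attractor :: "real \<Rightarrow> (real \<times> real) set" where
  "attractor \<beta> = (THE S. compact S \<and> S \<noteq> {} \<and> S = (\<Union>i\<in>{0,1,2}. ifs_map \<beta> i ` S))"

definition Hset :: "real \<Rightarrow> (real \<times> real) set" where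
  "Hset \<beta> = {(x,y). x < 1/\<beta> \<and> y < 1/\<beta> \<and> x + y > 1/(\<beta>*(\<beta>-1))}"

definition Et :: "real \<Rightarrow> nat \<Rightarrow> (real \<times> real) set" where
  "Et \<beta> i =
    (if i = 0 then {(x,y). 0 \<le> x \<and> x < 1/\<beta> \<and> 0 \<le> y \<and> y < 1/\<beta>} - Hset \<beta>
     else if i = 1 then {(x,y). 0 \<le> y \<and> y < 1/\<beta> \<and> 1/(\<beta>*(\<beta>-1)) < x + y \<and> x + y \<le> 1/(\<beta>-1)} - Hset \<beta>
     else {(x,y). 0 \<le> x \<and> x < 1/\<beta> \<and> 1/(\<beta>*(\<beta>-1)) < x + y \<and> x + y \<le> 1/(\<beta>-1)} - Hset \<beta>)"

definition Ct :: "real \<Rightarrow> nat \<Rightarrow> nat \<Rightarrow> (real \<times> real) set" where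
  "Ct \<beta> i j =
    (if (i,j) = (0,1) then {(x,y). x \<ge> 1/\<beta> \<and> y \<ge> 0 \<and> x + y \<le> 1/(\<beta>*(\<beta>-1))}
     else if (i,j) = (1,2) then {(x,y). x \<ge> 1/\<beta> \<and> y \<ge> 1/\<beta> \<and> x + y \<le> 1/(\<beta>-1)}
     else {(x,y). x \<ge> 0 \<and> y \<ge> 1/\<beta> \<and> x + y \<le> 1/(\<beta>*(\<beta>-1))})"

definition Eset :: "real \<Rightarrow> nat \<Rightarrow> (real \<times> real) set" where
  "Eset \<beta> i =
    (Et \<beta> i \<union> (\<Union>j\<in>{0,1,2} - {i}. \<Union>n\<in>{1..}. ifs_map \<beta> j ` ((ifs_map \<beta> i ^^ n) ` Hset \<beta>)))
     - (\<Union>n. (ifs_map \<beta> i ^^ n) ` Hset \<beta>)"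

definition Cset :: "real \<Rightarrow> nat \<Rightarrow> nat \<Rightarrow> (real \<times> real) set" where
  "Cset \<beta> i j =
    Ct \<beta> i j - ((\<Union>n\<in>{1..}. ifs_map \<beta> i ` ((ifs_map \<beta> j ^^ n) ` Hset \<beta>))
                 \<union> (\<Union>n\<in>{1..}. ifs_map \<beta> j ` ((ifs_map \<beta> i ^^ n) ` Hset \<beta>)))"

text \<open>Omega = {0,1}^N as bool sequences (False = 0, True = 1); \<omega> 0 is the first coordinate \<omega>_1.
  The digit is returned as the index i of the vector q_i subtracted.\<close>
definition digit1 :: "real \<Rightarrow> (nat \<Rightarrow> bool) \<Rightarrow> real \<times> real \<Rightarrow> nat" where
  "digit1 \<beta> \<omega> z =
    (if z \<in> Eset \<beta> 0 then 0
     else if z \<in> Eset \<beta> 1 then 1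
     else if z \<in> Eset \<beta> 2 then 2
     else if z \<in> Cset \<beta> 0 1 then (if \<omega> 0 then 1 else 0)
     else if z \<in> Cset \<beta> 1 2 then (if \<omega> 0 then 2 else 1)
     else if z \<in> Cset \<beta> 0 2 then (if \<omega> 0 then 2 else 0)
     else 0)"

definition Kmap :: "real \<Rightarrow> (nat \<Rightarrow> bool) \<times> (real \<times> real) \<Rightarrow> (nat \<Rightarrow> bool) \<times> (real \<times> real)" where
  "Kmap \<beta> p = (case p of (\<omega>, z) \<Rightarrow>
     ((if z \<notin> Eset \<beta> 0 \<union> Eset \<beta> 1 \<union> Eset \<beta> 2 \<and> z \<in> Cset \<beta> 0 1 \<union> Cset \<beta> 1 2 \<union> Cset \<beta> 0 2
       then (\<lambda>n. \<omega> (Suc n)) else \<omega>),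
      \<beta> *\<^sub>R z - qv (digit1 \<beta> \<omega> z)))"

text \<open>digits \<beta> \<omega> z n = d_(n+1)(\<omega>, z).\<close>
definition digits :: "real \<Rightarrow> (nat \<Rightarrow> bool) \<Rightarrow> real \<times> real \<Rightarrow> nat \<Rightarrow> nat" where
  "digits \<beta> \<omega> z n = (case (Kmap \<beta> ^^ n) (\<omega>, z) of (\<omega>', z') \<Rightarrow> digit1 \<beta> \<omega>' z')"

definition lex_less :: "(nat \<Rightarrow> 'a::linorder) \<Rightarrow> (nat \<Rightarrow> 'a) \<Rightarrow> bool" where
  "lex_less a b \<longleftrightarrow> (\<exists>n. (\<forall>k<n. a k = b k) \<and> a n < b n)"

definition lex_le :: "(nat \<Rightarrow> 'a::linorder) \<Rightarrow> (nat \<Rightarrow> 'a) \<Rightarrow> bool" where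
  "lex_le a b \<longleftrightarrow> a = b \<or> lex_less a b"

end

theory Submission
  imports Defs
begin

text \<open>The map \<open>K\<^sub>\<beta>\<close> reads its sequence coordinate only at points of the switch region
  (in some \<open>C\<^sub>i\<^sub>j\<close> but in no \<open>E\<^sub>i\<close>), and there the digit chosen for \<open>\<omega>\<^sub>1 = 1\<close> is the larger one.
  As long as the two digit sequences agree, both orbits sit at the same point of the plane and have
  consumed the same prefix of \<open>\<omega>\<close> and \<open>\<omega>'\<close>, on which the two sequences agree. Hence the first
  differing digit is produced at a switch point reading the first position where \<open>\<omega>\<close> and \<open>\<omega>'\<close>
  differ, and there \<open>\<omega>\<close> has 0 and \<open>\<omega>'\<close> has 1.\<close>

definition switch_region :: "real \<Rightarrow> (real \<times> real) set" where
  "switch_region \<beta> =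
    (Cset \<beta> 0 1 \<union> Cset \<beta> 1 2 \<union> Cset \<beta> 0 2) - (Eset \<beta> 0 \<union> Eset \<beta> 1 \<union> Eset \<beta> 2)"

lemma lex_le_if_first_difference_less:
  fixes a b :: "nat \<Rightarrow> 'a::linorder"
  assumes "\<And>k. \<forall>t<k. a t = b t \<Longrightarrow> a k \<noteq> b k \<Longrightarrow> a k < b k"
  shows "lex_le a b"
proof (cases "a = b")
  case False
  then have "\<exists>t. a t \<noteq> b t" by auto
  define k where "k = (LEAST t. a t \<noteq> b t)"
  have "a k \<noteq> b k" and prefix: "\<forall>t<k. a t = b t"
    unfolding k_def using LeastI_ex[OF \<open>\<exists>t. a t \<noteq> b t\<close>] not_less_Least by auto
  with assms have "a k < b k" by blast
  with prefix show ?thesis unfolding lex_le_def lex_less_def by blast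
qed (simp add: lex_le_def)

lemma lex_less_at_first_difference:
  fixes a b :: "nat \<Rightarrow> 'a::linorder"
  assumes "lex_less a b" and "\<forall>m<c. a m = b m" and "a c \<noteq> b c"
  shows "a c < b c"
proof -
  obtain n where prefix: "\<forall>m<n. a m = b m" and less: "a n < b n"
    using assms(1) unfolding lex_less_def by blast
  have "c = n"
    using assms(2,3) prefix less by (metis linorder_neqE_nat order_less_irrefl)
  with less show ?thesis by simp
qed

lemma digit1_outside_switch_region:
  "z \<notin> switch_region \<beta> \<Longrightarrow> digit1 \<beta> \<omega> z = digit1 \<beta> \<omega>' z"
  unfolding switch_region_def digit1_def by auto

lemma digit1_in_switch_region_eq_iff:
  "z \<in> switch_region \<beta> \<Longrightarrow> digit1 \<beta> \<omega> z = digit1 \<beta> \<omega>' z \<longleftrightarrow> \<omega> 0 = \<omega>' 0"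
  unfolding switch_region_def digit1_def by auto

lemma digit1_in_switch_region_mono:
  "z \<in> switch_region \<beta> \<Longrightarrow> \<not> \<omega> 0 \<Longrightarrow> \<omega>' 0 \<Longrightarrow> digit1 \<beta> \<omega> z < digit1 \<beta> \<omega>' z"
  unfolding switch_region_def digit1_def by auto

lemma Kmap_Pair:
  "Kmap \<beta> (\<omega>, z) =
    (if z \<in> switch_region \<beta> then (\<lambda>m. \<omega> (Suc m)) else \<omega>, \<beta> *\<^sub>R z - qv (digit1 \<beta> \<omega> z))"
  unfolding Kmap_def switch_region_def by auto

lemma digits_eq_digit1_iterate:
  "(Kmap \<beta> ^^ k) (\<omega>, z) = (\<lambda>m. \<omega> (m + c), w) \<Longrightarrow>
    digits \<beta> \<omega> z k = digit1 \<beta> (\<lambda>m. \<omega> (m + c)) w"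
  by (simp add: digits_def)

lemma Kmap_iterate_common_prefix:
  assumes "\<forall>t<k. digits \<beta> \<omega> z t = digits \<beta> \<omega>' z t"
  shows "\<exists>c w. (\<forall>m<c. \<omega> m = \<omega>' m)
    \<and> (Kmap \<beta> ^^ k) (\<omega>, z) = (\<lambda>m. \<omega> (m + c), w)
    \<and> (Kmap \<beta> ^^ k) (\<omega>', z) = (\<lambda>m. \<omega>' (m + c), w)"
  using assms
proof (induction k)
  case 0
  show ?case by (intro exI[of _ 0] exI[of _ z]) simp
next
  case (Suc k)
  then obtain c w where prefix: "\<forall>m<c. \<omega> m = \<omega>' m"
    and orbit: "(Kmap \<beta> ^^ k) (\<omega>, z) = (\<lambda>m. \<omega> (m + c), w)"
    and orbit': "(Kmap \<beta> ^^ k) (\<omega>', z) = (\<lambda>m. \<omega>' (m + c), w)"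
    by auto
  have same_digit: "digit1 \<beta> (\<lambda>m. \<omega> (m + c)) w = digit1 \<beta> (\<lambda>m. \<omega>' (m + c)) w"
    using Suc.prems orbit orbit' digits_eq_digit1_iterate by (metis lessI)
  define w' where "w' = \<beta> *\<^sub>R w - qv (digit1 \<beta> (\<lambda>m. \<omega> (m + c)) w)"
  show ?case
  proof (cases "w \<in> switch_region \<beta>")
    case True
    then have "\<omega> c = \<omega>' c"
      using same_digit digit1_in_switch_region_eq_iff by fastforce
    with prefix have "\<forall>m<Suc c. \<omega> m = \<omega>' m" by (simp add: less_Suc_eq)
    with True show ?thesis using orbit orbit' same_digit
      by (intro exI[of _ "Suc c"] exI[of _ w']) (simp add: Kmap_Pair w'_def)
  next
    case False
    with prefix show ?thesis using orbit orbit' same_digit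
      by (intro exI[of _ c] exI[of _ w']) (simp add: Kmap_Pair w'_def)
  qed
qed

theorem theorem6p5:
  fixes \<beta> :: real and \<omega> \<omega>' :: "nat \<Rightarrow> bool" and z :: "real \<times> real"
  assumes "3/2 < \<beta>" and "\<beta> \<le> beta_star"
    and "lex_less \<omega> \<omega>'"
    and "z \<in> attractor \<beta>"
  shows "lex_le (digits \<beta> \<omega> z) (digits \<beta> \<omega>' z)"
proof (rule lex_le_if_first_difference_less)
  fix k
  assume "\<forall>t<k. digits \<beta> \<omega> z t = digits \<beta> \<omega>' z t"
    and differ: "digits \<beta> \<omega> z k \<noteq> digits \<beta> \<omega>' z k"
  then obtain c w where prefix: "\<forall>m<c. \<omega> m = \<omega>' m"
    and orbit: "(Kmap \<beta> ^^ k) (\<omega>, z) = (\<lambda>m. \<omega> (m + c), w)"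
    and orbit': "(Kmap \<beta> ^^ k) (\<omega>', z) = (\<lambda>m. \<omega>' (m + c), w)"
    using Kmap_iterate_common_prefix by blast
  have digit_differ: "digit1 \<beta> (\<lambda>m. \<omega> (m + c)) w \<noteq> digit1 \<beta> (\<lambda>m. \<omega>' (m + c)) w"
    using differ orbit orbit' by (simp add: digits_eq_digit1_iterate)
  then have switch: "w \<in> switch_region \<beta>"
    using digit1_outside_switch_region by blast
  with digit_differ have "\<omega> c \<noteq> \<omega>' c"
    using digit1_in_switch_region_eq_iff by fastforce
  with assms(3) prefix have "\<omega> c < \<omega>' c"
    by (rule lex_less_at_first_difference)
  with switch show "digits \<beta> \<omega> z k < digits \<beta> \<omega>' z k"
    using orbit orbit' digit1_in_switch_region_mono
    by (simp add: digits_eq_digit1_iterate)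
qed

end
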